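(* For any $X\in\mathcal{O}^{d,r}$, $\mathbb{P}_\circ\in\mathscr{Q}_2$ and $\rho\ge 0$, with $p=2$, $$\varphi(X)=\Big(\big(\mathrm{tr}((I_d-XX^\top)\Sigma_\circ)\big)^{1/2}+\rho\Big)^2 .$$ Consequently, for every $X\in\mathcal{O}^{d,r}$ and any function $s:\mathbb{R}^{d\times r}\to\mathbb{R}$, $$\varphi(X)+s(X)=\mathrm{tr}((I_d-XX^\top)\Sigma_\circ)+s(X)+2\rho\,\|(I_d-XX^\top)\Sigma_\circ^{1/2}\|_{\mathrm F}+\rho^2,$$ so minimizing $\varphi+s$ over $\mathcal{O}^{d,r}$ is equivalent to minimizing $\mathrm{tr}((I_d-XX^\top)\Sigma_\circ)+s(X)+2\rho\|(I_d-XX^\top)\Sigma_\circ^{1/2}\|_{\mathrm F}$ over $\mathcal{O}^{d,r}$.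
   Context: Let $d,r$ be integers with $1\le r<d$ and $\mathcal{O}^{d,r}=\{X\in\mathbb{R}^{d\times r}: X^\top X=I_r\}$. $\mathscr{Q}_2$ is the set of Borel probability distributions on $\mathbb{R}^d$ with finite second moment, and $\mathbb{W}_2(\mathbb{P}_1,\mathbb{P}_2)=\inf_{\mathbb{Q}\in\mathscr{J}(\mathbb{P}_1,\mathbb{P}_2)}\big(\mathbb{E}_{(\xi_1,\xi_2)\sim\mathbb{Q}}\|\xi_1-\xi_2\|_2^2\big)^{1/2}$, with $\mathscr{J}(\mathbb{P}_1,\mathbb{P}_2)$ the set of couplings. For $X\in\mathcal{O}^{d,r}$, $\varphi(X)=\sup\{\mathbb{E}_{\mathbb{P}}\big[\|(I_d-XX^\top)(\xi-\mathbb{E}_{\mathbb{P}}[\xi])\|_2^2\big]:\mathbb{P}\in\mathscr{Q}_2,\ \mathbb{W}_2(\mathbb{P},\mathbb{P}_\circ)\le\rho\}$. $\Sigma_\circ=\mathbb{E}_{\mathbb{P}_\circ}[(\xi-\mathbb{E}_{\mathbb{P}_\circ}[\xi])(\xi-\mathbb{E}_{\mathbb{P}_\circ}[\xi])^\top]$ and $\Sigma_\circ^{1/2}$ its positive semidefinite square root. *)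

theory Defs
  imports "HOL-Analysis.Analysis" "HOL-Probability.Probability"
begin

definition stiefel :: "(real^'r^'d) set" where
  "stiefel = {X. transpose X ** X = mat 1}"

definition Q2 :: "(real^'d) measure set" where
  "Q2 = {P. prob_space P \<and> sets P = sets borel \<and> integrable P (\<lambda>x. (norm x)\<^sup>2)}"

definition couplings :: "(real^'d) measure \<Rightarrow> (real^'d) measure \<Rightarrow> ((real^'d) \<times> (real^'d)) measure set" where
  "couplings P1 P2 = {Q. prob_space Q \<and> sets Q = sets borel \<and>
      distr Q borel fst = P1 \<and> distr Q borel snd = P2}"

definition W2 :: "(real^'d) measure \<Rightarrow> (real^'d) measure \<Rightarrow> real" where
  "W2 P1 P2 = sqrt (Inf {(\<integral>z. (norm (fst z - snd z))\<^sup>2 \<partial>Q) | Q. Q \<in> couplings P1 P2})"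

definition mean :: "(real^'d) measure \<Rightarrow> real^'d" where
  "mean P = (\<integral>x. x \<partial>P)"

definition covar :: "(real^'d) measure \<Rightarrow> real^'d^'d" where
  "covar P = (\<chi> i j. \<integral>x. (x$i - mean P $ i) * (x$j - mean P $ j) \<partial>P)"

definition psd :: "real^'d^'d \<Rightarrow> bool" where
  "psd S \<longleftrightarrow> transpose S = S \<and> (\<forall>v. v \<bullet> (S *v v) \<ge> 0)"

definition psd_sqrt :: "real^'d^'d \<Rightarrow> real^'d^'d" where
  "psd_sqrt S = (THE R. psd R \<and> R ** R = S)"

definition frob :: "real^'n^'m \<Rightarrow> real" where
  "frob A = sqrt (\<Sum>i\<in>UNIV. \<Sum>j\<in>UNIV. (A$i$j)\<^sup>2)"

definition perp_proj :: "real^'r^'d \<Rightarrow> real^'d^'d" where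
  "perp_proj X = mat 1 - X ** transpose X"

definition phi :: "(real^'d) measure \<Rightarrow> real \<Rightarrow> real^'r^'d \<Rightarrow> real" where
  "phi P0 \<rho> X = Sup {(\<integral>x. ((norm (perp_proj X *v (x - mean P)))\<^sup>2) \<partial>P) | P.
        P \<in> Q2 \<and> W2 P P0 \<le> \<rho>}"

end

theory Submission
  imports Defs
begin

(* Write Pi = I - X X^T for the projection onto the complement of the columns of X,
   T = E|Pi (xi - E xi)|^2 for the residual variance under P0, and Sigma0 for the covariance.

   Upper bound: given a coupling (xi, xi0) of P and P0, put w = xi - xi0.  The residual
   Pi (xi - E xi) equals Pi (xi0 - E xi0) + Pi (w - E w), so Minkowski's inequality in L^2
   gives sqrt (residual variance of P) <= sqrt T + sqrt (E |w|^2); taking the infimum over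
   couplings, the residual variance of P is at most (sqrt T + W2 P P0)^2.

   Lower bound: pick u with Pi u = u and let B be a fair sign independent of xi0 ~ P0.  The
   law of xi0 + c Pi (xi0 - E xi0) + B u has the same mean as P0, residual variance
   (1 + c)^2 T + |u|^2, and transport cost c^2 T + |u|^2 to P0.  Spending the whole budget rho
   on c (if T > 0) or on u (if T = 0, possible since r < d) attains (sqrt T + rho)^2.

   Finally T = tr (Pi Sigma0) = |Pi Sigma0^(1/2)|_F^2, because Pi is an orthogonal projection. *)

lemma inner_symmetric_matrix:
  fixes S :: "real^'n^'n"
  assumes "transpose S = S"
  shows "x \<bullet> (S *v y) = (S *v x) \<bullet> y"
proof -
  have "x \<bullet> (S *v y) = (x v* S) \<bullet> y" by (simp add: dot_lmul_matrix)
  also have "x v* S = transpose S *v x" by simp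
  finally show ?thesis using assms by simp
qed

lemma linear_coeff_eq_0_if_quadratic_nonpos:
  fixes a b :: real
  assumes "\<And>t. a * t + b * t\<^sup>2 \<le> 0"
  shows "a = 0"
proof (rule ccontr)
  assume a: "a \<noteq> 0"
  define k where "k = \<bar>b\<bar> + 1"
  have k: "k > 0" "\<bar>b\<bar> \<le> k" by (auto simp: k_def)
  define t where "t = a / (2*k)"
  have 1: "a * t = a\<^sup>2 / (2*k)" by (simp add: t_def power2_eq_square)
  have "b * t\<^sup>2 \<ge> - (\<bar>b\<bar> * t\<^sup>2)" by (simp add: abs_mult_pos abs_le_iff)
  moreover have "\<bar>b\<bar> * t\<^sup>2 \<le> k * t\<^sup>2" using k by (simp add: mult_right_mono)
  moreover have "k * t\<^sup>2 = a\<^sup>2 / (4*k)" using k by (simp add: t_def power2_eq_square field_simps)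
  ultimately have "a * t + b * t\<^sup>2 \<ge> a\<^sup>2/(2*k) - a\<^sup>2/(4*k)" using 1 by linarith
  moreover have "a\<^sup>2/(2*k) - a\<^sup>2/(4*k) = a\<^sup>2/(4*k)" using k by (simp add: field_simps)
  moreover have "a\<^sup>2/(4*k) > 0" using a k by simp
  ultimately show False using assms[of t] by linarith
qed

lemma rayleigh_maximizer_is_eigenvector:
  fixes S :: "real^'n^'n"
  assumes sym: "transpose S = S" and V: "subspace V"
    and inv: "\<And>x. x \<in> V \<Longrightarrow> S *v x \<in> V"
    and u: "u \<in> V" "norm u = 1"
    and max: "\<And>y. y \<in> V \<Longrightarrow> y \<bullet> (S *v y) \<le> (u \<bullet> (S *v u)) * (norm y)\<^sup>2"
  shows "S *v u = (u \<bullet> (S *v u)) *\<^sub>R u"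
proof -
  define l where "l = u \<bullet> (S *v u)"
  have orth: "w \<bullet> (S *v u - l *\<^sub>R u) = 0" if w: "w \<in> V" for w
  proof -
    have "(2 * (w \<bullet> (S *v u) - l * (u \<bullet> w))) * t + (w \<bullet> (S *v w) - l * (norm w)\<^sup>2) * t\<^sup>2 \<le> 0"
      for t
    proof -
      have "u + t *\<^sub>R w \<in> V" using u w V by (simp add: subspace_add subspace_scale)
      then have "(u + t *\<^sub>R w) \<bullet> (S *v (u + t *\<^sub>R w)) \<le> l * (norm (u + t *\<^sub>R w))\<^sup>2"
        using max l_def by blast
      moreover have "(u + t *\<^sub>R w) \<bullet> (S *v (u + t *\<^sub>R w)) =
          l + 2 * t * (w \<bullet> (S *v u)) + t\<^sup>2 * (w \<bullet> (S *v w))"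
        using inner_symmetric_matrix[OF sym, of u w] l_def
        by (simp add: matrix_vector_right_distrib matrix_vector_mult_scaleR inner_add_left
            inner_add_right power2_eq_square algebra_simps inner_commute)
      moreover have "(norm (u + t *\<^sub>R w))\<^sup>2 = 1 + 2 * t * (u \<bullet> w) + t\<^sup>2 * (norm w)\<^sup>2"
        using u(2) unfolding power2_norm_eq_inner
        by (simp add: inner_add_left inner_add_right algebra_simps inner_commute power2_eq_square
            norm_eq_1)
      ultimately show ?thesis by (simp add: algebra_simps power2_eq_square)
    qed
    from linear_coeff_eq_0_if_quadratic_nonpos[OF this] show ?thesis
      by (simp add: inner_diff_right inner_commute)
  qed
  have "S *v u - l *\<^sub>R u \<in> V" using inv[OF u(1)] u(1) V by (simp add: subspace_diff subspace_scale)
  from orth[OF this] show ?thesis by (simp add: l_def)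
qed

lemma invariant_subspace_has_unit_eigenvector:
  fixes S :: "real^'n^'n"
  assumes sym: "transpose S = S" and V: "subspace V" and ne: "V \<noteq> {0}"
    and inv: "\<And>x. x \<in> V \<Longrightarrow> S *v x \<in> V"
  obtains u where "u \<in> V" "norm u = 1" "S *v u = (u \<bullet> (S *v u)) *\<^sub>R u"
proof -
  define K where "K = V \<inter> sphere 0 1"
  have normalize_in_K: "y /\<^sub>R norm y \<in> K" if "y \<in> V" "y \<noteq> 0" for y
    using that V by (auto simp: K_def subspace_scale)
  obtain x where "x \<in> V" "x \<noteq> 0" using ne V subspace_0 by blast
  then have "K \<noteq> {}" using normalize_in_K by blast
  moreover have "compact K" unfolding K_def by (intro closed_Int_compact closed_subspace V compact_sphere)
  moreover have "continuous_on K (\<lambda>x. x \<bullet> (S *v x))" by (intro continuous_intros)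
  ultimately obtain u where u: "u \<in> K" and umax: "\<And>y. y \<in> K \<Longrightarrow> y \<bullet> (S *v y) \<le> u \<bullet> (S *v u)"
    using continuous_attains_sup by metis
  have "y \<bullet> (S *v y) \<le> (u \<bullet> (S *v u)) * (norm y)\<^sup>2" if "y \<in> V" for y
  proof (cases "y = 0")
    case False
    then have "(y /\<^sub>R norm y) \<bullet> (S *v (y /\<^sub>R norm y)) \<le> u \<bullet> (S *v u)"
      using umax normalize_in_K that by blast
    then have "(y \<bullet> (S *v y)) / (norm y)\<^sup>2 \<le> u \<bullet> (S *v u)"
      by (simp add: matrix_vector_mult_scaleR power2_eq_square divide_simps)
    then show ?thesis using False by (simp add: divide_simps mult.commute)
  qed simp
  moreover have "u \<in> V" "norm u = 1" using u by (auto simp: K_def)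
  ultimately show ?thesis
    using that rayleigh_maximizer_is_eigenvector[OF sym V inv] by blast
qed

definition orthonormal :: "'a::real_inner set \<Rightarrow> bool" where
  "orthonormal B \<longleftrightarrow> pairwise orthogonal B \<and> (\<forall>b\<in>B. norm b = 1)"

lemma span_insert_unit_orthogonal_complement:
  assumes V: "subspace V" and u: "u \<in> V" "u \<bullet> u = 1" and B: "span B = V \<inter> {x. u \<bullet> x = 0}"
  shows "span (insert u B) = V"
proof
  show "span (insert u B) \<subseteq> V"
    using B u(1) V span_superset[of B] by (intro span_minimal) auto
  show "V \<subseteq> span (insert u B)"
  proof
    fix x assume x: "x \<in> V"
    have "x - (u \<bullet> x) *\<^sub>R u \<in> span B"
      using x u V B by (auto simp: subspace_diff subspace_scale inner_diff_right)
    then have "(x - (u \<bullet> x) *\<^sub>R u) + (u \<bullet> x) *\<^sub>R u \<in> span (insert u B)"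
      by (meson span_add span_base span_mono span_scale insertI1 subset_insertI subsetD)
    then show "x \<in> span (insert u B)" by simp
  qed
qed

lemma invariant_subspace_orthonormal_eigenbasis:
  fixes S :: "real^'n^'n"
  assumes sym: "transpose S = S"
  shows "subspace V \<Longrightarrow> (\<forall>x\<in>V. S *v x \<in> V) \<Longrightarrow> \<exists>B. B \<subseteq> V \<and> finite B \<and> orthonormal B \<and>
     (\<forall>b\<in>B. S *v b = (b \<bullet> (S *v b)) *\<^sub>R b) \<and> span B = V"
proof (induction "dim V" arbitrary: V rule: less_induct)
  case (less V)
  show ?case
  proof (cases "V = {0}")
    case True
    then show ?thesis by (intro exI[of _ "{}"]) (auto simp: orthonormal_def)
  next
    case False
    obtain u where u: "u \<in> V" "norm u = 1" "S *v u = (u \<bullet> (S *v u)) *\<^sub>R u"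
      using invariant_subspace_has_unit_eigenvector[OF sym less.prems(1) False] less.prems(2)
      by blast
    have uu: "u \<bullet> u = 1" using u(2) by (simp add: power2_norm_eq_inner[symmetric])
    define W where "W = V \<inter> {x. u \<bullet> x = 0}"
    have sW: "subspace W"
      unfolding W_def using less.prems(1) subspace_orthogonal_to_vector[of u]
      by (simp add: subspace_inter orthogonal_def)
    have iW: "\<forall>x\<in>W. S *v x \<in> W"
    proof
      fix x assume x: "x \<in> W"
      have "u \<bullet> (S *v x) = (S *v u) \<bullet> x" by (rule inner_symmetric_matrix[OF sym])
      also have "\<dots> = (u \<bullet> (S *v u)) * (u \<bullet> x)" by (subst u(3)) simp
      finally show "S *v x \<in> W" using x less.prems(2) by (auto simp: W_def)
    qed
    have "u \<notin> W" using uu by (simp add: W_def)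
    then have "W \<subset> V" using u(1) unfolding W_def by blast
    then have "dim W < dim V" using sW less.prems(1) by (metis dim_psubset span_eq_iff)
    from less.hyps[OF this sW iW] obtain B where
      B: "B \<subseteq> W" "finite B" "orthonormal B"
         "\<forall>b\<in>B. S *v b = (b \<bullet> (S *v b)) *\<^sub>R b" "span B = W" by blast
    have "span (insert u B) = V"
      using span_insert_unit_orthogonal_complement[OF less.prems(1) u(1) uu] B(5) by (simp add: W_def)
    moreover have "orthonormal (insert u B)"
      using B(1,3) u(2) by (auto simp: orthonormal_def W_def pairwise_insert orthogonal_def inner_commute)
    ultimately show ?thesis
      using B u by (intro exI[of _ "insert u B"]) (auto simp: W_def)
  qed
qed

lemma symmetric_matrix_orthonormal_eigenbasis:
  fixes S :: "real^'n^'n"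
  assumes "transpose S = S"
  obtains B where "finite B" "orthonormal B" "span B = UNIV"
    "\<And>b. b \<in> B \<Longrightarrow> S *v b = (b \<bullet> (S *v b)) *\<^sub>R b"
  using invariant_subspace_orthonormal_eigenbasis[OF assms, of UNIV] by auto

lemma matrix_eq_on_spanning_set:
  fixes A C :: "real^'n^'m"
  assumes "span B = UNIV" and "\<And>b. b \<in> B \<Longrightarrow> A *v b = C *v b"
  shows "A = C"
proof -
  have "A *v x = C *v x" for x
    using linear_eq_on[OF matrix_vector_mul_linear matrix_vector_mul_linear, of x B] assms by auto
  then show ?thesis by (simp add: matrix_eq)
qed

lemma psd_root_on_eigenvector:
  fixes R S :: "real^'n^'n"
  assumes R: "psd R" and RR: "R ** R = S" and eig: "S *v b = lam *\<^sub>R b" and l: "lam \<ge> 0"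
  shows "R *v b = sqrt lam *\<^sub>R b"
proof -
  define \<mu> where "\<mu> = sqrt lam"
  have mu: "\<mu> \<ge> 0" "\<mu> * \<mu> = lam" using l by (auto simp: \<mu>_def)
  have symR: "transpose R = R" and pR: "\<And>v. v \<bullet> (R *v v) \<ge> 0" using R by (auto simp: psd_def)
  define y where "y = R *v b - \<mu> *\<^sub>R b"
  have Ry: "R *v y = - \<mu> *\<^sub>R y"
    using RR eig mu
    by (simp add: y_def matrix_vector_mult_diff_distrib matrix_vector_mult_scaleR
        matrix_vector_mul_assoc algebra_simps)
  then have "\<mu> * (y \<bullet> y) \<le> 0" using pR[of y] by simp
  moreover have "\<mu> * (y \<bullet> y) \<ge> 0" using mu by simp
  ultimately have "\<mu> * (y \<bullet> y) = 0" by linarith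
  then consider "y = 0" | "\<mu> = 0" by auto
  then show ?thesis
  proof cases
    case 2
    then have "R *v (R *v b) = 0" using Ry by (simp add: y_def)
    then have "(R *v b) \<bullet> (R *v b) = 0"
      using inner_symmetric_matrix[OF symR, of b "R *v b"] by simp
    then show ?thesis using 2 by (simp add: \<mu>_def)
  qed (simp add: y_def \<mu>_def)
qed

text \<open>The root is \<open>\<Sum>\<^sub>b sqrt \<lambda>\<^sub>b b b\<^sup>T\<close> over an orthonormal eigenbasis; any other psd root
  agrees with it on that basis.\<close>
lemma ex1_psd_square_root:
  fixes S :: "real^'n^'n"
  assumes S: "psd S"
  shows "\<exists>!R. psd R \<and> R ** R = S"
proof -
  have symS: "transpose S = S" and pS: "\<And>v. v \<bullet> (S *v v) \<ge> 0" using S by (auto simp: psd_def)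
  obtain B where B: "finite B" "orthonormal B" "span B = UNIV"
    and eig0: "\<And>b. b \<in> B \<Longrightarrow> S *v b = (b \<bullet> (S *v b)) *\<^sub>R b"
    using symmetric_matrix_orthonormal_eigenbasis[OF symS] by blast
  define lam where "lam b = b \<bullet> (S *v b)" for b
  have lam_nonneg: "lam b \<ge> 0" for b using pS by (simp add: lam_def)
  have eig: "b \<in> B \<Longrightarrow> S *v b = lam b *\<^sub>R b" for b using eig0 by (simp add: lam_def)
  have inner_B: "b \<in> B \<Longrightarrow> c \<in> B \<Longrightarrow> b \<bullet> c = (if b = c then 1 else 0)" for b c
    using B(2) by (auto simp: orthonormal_def pairwise_def orthogonal_def
        power2_norm_eq_inner[symmetric])
  define R0 :: "real^'n^'n" where "R0 = (\<chi> i j. \<Sum>b\<in>B. sqrt (lam b) * (b$i * b$j))"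
  have R0_apply: "R0 *v x = (\<Sum>b\<in>B. (sqrt (lam b) * (b \<bullet> x)) *\<^sub>R b)" for x
    by (simp add: R0_def vec_eq_iff matrix_vector_mult_def inner_vec_def sum_distrib_left
        sum_distrib_right sum_component mult_ac sum.swap[where A=B])
  have R0_eig: "R0 *v c = sqrt (lam c) *\<^sub>R c" if c: "c \<in> B" for c
  proof -
    have "R0 *v c = (\<Sum>b\<in>B. if b = c then sqrt (lam c) *\<^sub>R c else 0)"
      unfolding R0_apply using c by (intro sum.cong) (auto simp: inner_B)
    also have "\<dots> = sqrt (lam c) *\<^sub>R c" using c B(1) by simp
    finally show ?thesis .
  qed
  have "v \<bullet> (R0 *v v) = (\<Sum>b\<in>B. sqrt (lam b) * (b \<bullet> v)\<^sup>2)" for v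
    by (simp add: R0_apply inner_sum_right power2_eq_square inner_commute mult_ac)
  then have "psd R0"
    using lam_nonneg by (simp add: psd_def R0_def transpose_def vec_eq_iff mult.commute sum_nonneg)
  moreover have "R0 ** R0 = S"
    using B(3) R0_eig eig lam_nonneg
    by (intro matrix_eq_on_spanning_set[of B])
      (simp_all add: matrix_vector_mul_assoc[symmetric] matrix_vector_mult_scaleR
        real_sqrt_mult[symmetric])
  moreover have "R = R0" if "psd R" "R ** R = S" for R
    using B(3) psd_root_on_eigenvector[OF that eig lam_nonneg] R0_eig
    by (intro matrix_eq_on_spanning_set[of B]) simp_all
  ultimately show ?thesis by blast
qed

lemma
  fixes S :: "real^'n^'n"
  assumes "psd S"
  shows psd_psd_sqrt: "psd (psd_sqrt S)"
    and psd_sqrt_square: "psd_sqrt S ** psd_sqrt S = S"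
  using theI'[OF ex1_psd_square_root[OF assms]] unfolding psd_sqrt_def by auto

definition recon_error :: "real^'r^'d \<Rightarrow> (real^'d) measure \<Rightarrow> real" where
  "recon_error X P = (\<integral>x. (norm (perp_proj X *v (x - mean P)))\<^sup>2 \<partial>P)"

lemma phi_eq_Sup_recon_error:
  "phi P0 \<rho> X = Sup {recon_error X P | P. P \<in> Q2 \<and> W2 P P0 \<le> \<rho>}"
  by (simp add: phi_def recon_error_def)

lemma recon_error_nonneg: "recon_error X P \<ge> 0"
  unfolding recon_error_def by (rule integral_nonneg_AE) simp

lemma perp_proj_apply: "perp_proj X *v x = x - X *v (transpose X *v x)"
  by (simp add: perp_proj_def matrix_vector_mult_diff_rdistrib matrix_vector_mul_assoc
      del: transpose_matrix_vector)

lemma transpose_perp_proj: "transpose (perp_proj X) = perp_proj X"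
  by (simp add: perp_proj_def transpose_def vec_eq_iff matrix_matrix_mult_def mat_def mult.commute)

lemma perp_proj_perp_proj_apply:
  assumes "X \<in> stiefel"
  shows "perp_proj X *v (perp_proj X *v x) = perp_proj X *v x"
proof -
  have "transpose X ** X = mat 1" using assms by (simp add: stiefel_def)
  then have "transpose X *v (perp_proj X *v x) = 0"
    by (simp add: perp_proj_apply matrix_vector_mult_diff_distrib matrix_vector_mul_assoc)
  then show ?thesis by (simp add: perp_proj_apply[of X "perp_proj X *v x"])
qed

lemma perp_proj_idem:
  assumes "X \<in> stiefel"
  shows "perp_proj X ** perp_proj X = perp_proj X"
  using perp_proj_perp_proj_apply[OF assms] by (simp add: matrix_eq matrix_vector_mul_assoc[symmetric])

lemma norm_perp_proj_sq:
  assumes "X \<in> stiefel"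
  shows "(norm (perp_proj X *v y))\<^sup>2 = y \<bullet> (perp_proj X *v y)"
  using inner_symmetric_matrix[OF transpose_perp_proj, of y X "perp_proj X *v y"]
  by (simp add: power2_norm_eq_inner perp_proj_perp_proj_apply[OF assms])

lemma norm_perp_proj_le:
  assumes "X \<in> stiefel"
  shows "norm (perp_proj X *v y) \<le> norm y"
proof -
  have "norm (perp_proj X *v y) * norm (perp_proj X *v y) \<le> norm y * norm (perp_proj X *v y)"
    using norm_perp_proj_sq[OF assms, of y] norm_cauchy_schwarz[of y "perp_proj X *v y"]
    by (simp add: power2_eq_square)
  then show ?thesis
    by (cases "perp_proj X *v y = 0") auto
qed

lemma frob_sq: "(frob A)\<^sup>2 = trace (A ** transpose A)"
  by (simp add: frob_def trace_def matrix_matrix_mult_def transpose_def power2_eq_square sum_nonneg)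

lemma frob_perp_proj_psd_sqrt:
  fixes S :: "real^'d^'d" and X :: "real^'r^'d"
  assumes X: "X \<in> stiefel" and S: "psd S"
  shows "frob (perp_proj X ** psd_sqrt S) = sqrt (trace (perp_proj X ** S))"
proof -
  let ?P = "perp_proj X" and ?R = "psd_sqrt S"
  have R: "transpose ?R = ?R" "?R ** ?R = S"
    using psd_psd_sqrt[OF S] psd_sqrt_square[OF S] by (auto simp: psd_def)
  have "(frob (?P ** ?R))\<^sup>2 = trace ((?P ** ?R) ** (?R ** ?P))"
    by (simp only: frob_sq matrix_transpose_mul R(1) transpose_perp_proj)
  also have "\<dots> = trace (?P ** (?R ** ?R) ** ?P)" by (simp only: matrix_mul_assoc)
  also have "\<dots> = trace (?P ** S ** ?P)" using R(2) by simp
  also have "\<dots> = trace (?P ** (?P ** S))" by (rule trace_mul_sym)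
  also have "\<dots> = trace (?P ** S)" by (simp add: matrix_mul_assoc perp_proj_idem[OF X])
  finally have "(frob (?P ** ?R))\<^sup>2 = trace (?P ** S)" .
  moreover have "frob (?P ** ?R) \<ge> 0" by (simp add: frob_def sum_nonneg)
  ultimately show ?thesis by (metis real_sqrt_unique)
qed

lemma perp_proj_fixes_unit_vector:
  fixes X :: "real^'r^'d"
  assumes rd: "CARD('r) < CARD('d)"
  obtains v where "norm v = 1" "perp_proj X *v v = v"
proof -
  define C where "C = range (\<lambda>j. column j X)"
  have "dim C \<le> card C" by (rule dim_le_card) (auto simp: C_def span_base)
  also have "card C \<le> CARD('r)" unfolding C_def by (rule card_image_le) simp
  finally have "dim C < DIM(real^'d)" using rd by simp
  then obtain w where w: "w \<noteq> 0" "\<And>y. y \<in> span C \<Longrightarrow> orthogonal w y"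
    using orthogonal_to_subspace_exists by blast
  have "(transpose X *v w) $ j = 0" for j
    using w(2)[of "column j X"]
    by (simp add: C_def span_base orthogonal_def inner_vec_def matrix_vector_mult_def
        transpose_def column_def mult.commute)
  then have "transpose X *v w = 0" by (simp add: vec_eq_iff)
  then have "perp_proj X *v w = w"
    by (simp add: perp_proj_apply del: transpose_matrix_vector)
  then show ?thesis
    using w(1) that[of "w /\<^sub>R norm w"] by (simp add: matrix_vector_mult_scaleR)
qed

lemma Q2D:
  assumes "P \<in> Q2"
  shows "prob_space P" "sets P = sets borel" "integrable P (\<lambda>x. (norm x)\<^sup>2)"
  using assms by (auto simp: Q2_def)

lemma borel_measurable_if_sets_eq_borel:
  "sets M = sets borel \<Longrightarrow> f \<in> borel_measurable borel \<Longrightarrow> f \<in> borel_measurable M"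
  using measurable_cong_sets[of M borel borel borel] by simp

lemma continuous_on_matrix_vector_mult_compose[continuous_intros]:
  "continuous_on S f \<Longrightarrow> continuous_on S (\<lambda>x. (A::real^'n^'m) *v f x)"
  by (rule bounded_linear.continuous_on[OF matrix_vector_mul_bounded_linear])

lemma Q2_integrable_quadratic_growth:
  fixes f :: "real^'d \<Rightarrow> 'b::{banach, second_countable_topology}"
  assumes P: "P \<in> Q2" and f: "f \<in> borel_measurable borel"
    and growth: "\<And>x. norm (f x) \<le> A * (norm x)\<^sup>2 + B"
  shows "integrable P f"
proof -
  interpret prob_space P using Q2D[OF P] by simp
  have "integrable P (\<lambda>x. A * (norm x)\<^sup>2 + B)" using Q2D(3)[OF P] by simp
  then show ?thesis
  proof (rule Bochner_Integration.integrable_bound)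
    show "f \<in> borel_measurable P" by (rule borel_measurable_if_sets_eq_borel[OF Q2D(2)[OF P] f])
    show "AE x in P. norm (f x) \<le> norm (A * (norm x)\<^sup>2 + B)"
      using growth by (intro AE_I2) (metis abs_ge_self order_trans real_norm_def)
  qed
qed

lemma Q2_integrable_linear_growth:
  fixes f :: "real^'d \<Rightarrow> 'b::{banach, second_countable_topology}"
  assumes P: "P \<in> Q2" and f: "f \<in> borel_measurable borel"
    and growth: "\<And>x. norm (f x) \<le> K * norm x + L" and K: "K \<ge> 0"
  shows "integrable P f" and "integrable P (\<lambda>x. (norm (f x))\<^sup>2)"
proof -
  have sq: "(K * norm x + L)\<^sup>2 \<le> 2 * K\<^sup>2 * (norm x)\<^sup>2 + 2 * L\<^sup>2" for x :: "real^'d"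
    using zero_le_power2[of "K * norm x - L"] by (simp add: power2_sum power2_diff power_mult_distrib)
  have "norm (f x) \<le> K * (norm x)\<^sup>2 + (K + L)" for x
  proof -
    have "2 * norm x \<le> (norm x)\<^sup>2 + 1"
      using zero_le_power2[of "norm x - 1"] by (simp add: power2_diff)
    then have "K * norm x \<le> K * ((norm x)\<^sup>2 + 1)"
      using norm_ge_zero[of x] K by (intro mult_left_mono) linarith+
    then show ?thesis using growth[of x] by (simp add: algebra_simps)
  qed
  then show "integrable P f" by (rule Q2_integrable_quadratic_growth[OF P f])
  show "integrable P (\<lambda>x. (norm (f x))\<^sup>2)"
  proof (rule Q2_integrable_quadratic_growth[OF P])
    show "norm ((norm (f x))\<^sup>2) \<le> 2 * K\<^sup>2 * (norm x)\<^sup>2 + 2 * L\<^sup>2" for x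
    proof -
      have "L \<ge> - K * norm x" using growth[of x] norm_ge_zero[of "f x"] by linarith
      then have "(norm (f x))\<^sup>2 \<le> (K * norm x + L)\<^sup>2"
        using growth[of x] by (intro power_mono) auto
      then show ?thesis using sq[of x] by simp
    qed
  qed (use f in simp)
qed

lemma Q2_integrable_id: "P \<in> Q2 \<Longrightarrow> integrable P (\<lambda>x. x::real^'d)"
  by (rule Q2_integrable_linear_growth(1)[where K=1 and L=0]) simp_all

lemma Q2_integrable_centered_sq:
  assumes "P \<in> Q2" "X \<in> stiefel"
  shows "integrable P (\<lambda>x. (norm (perp_proj X *v (x - m)))\<^sup>2)"
proof (rule Q2_integrable_linear_growth(2)[OF assms(1), where K=1 and L="norm m"])
  show "norm (perp_proj X *v (x - m)) \<le> 1 * norm x + norm m" for x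
    using norm_perp_proj_le[OF assms(2), of "x - m"] norm_triangle_ineq4[of x m] by simp
qed (auto intro!: borel_measurable_continuous_onI continuous_intros)

lemma norm_diff_sq_le: "(norm (x - y :: 'a::real_normed_vector))\<^sup>2 \<le> 2 * (norm x)\<^sup>2 + 2 * (norm y)\<^sup>2"
proof -
  have "(norm (x - y))\<^sup>2 \<le> (norm x + norm y)\<^sup>2"
    using norm_triangle_ineq4[of x y] by (simp add: power_mono)
  also have "\<dots> \<le> 2 * (norm x)\<^sup>2 + 2 * (norm y)\<^sup>2"
    using zero_le_power2[of "norm x - norm y"] by (simp add: power2_eq_square algebra_simps)
  finally show ?thesis .
qed

lemma Q2_integrable_centered_product:
  "P \<in> Q2 \<Longrightarrow> integrable P (\<lambda>x. ((x::real^'d) $ i - a $ i) * (x $ j - a $ j))"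
proof (rule Q2_integrable_quadratic_growth[where A=4 and B="4 * (norm a)\<^sup>2"])
  fix x :: "real^'d"
  have comp: "(x $ k - a $ k)\<^sup>2 \<le> 2 * (norm x)\<^sup>2 + 2 * (norm a)\<^sup>2" for k
  proof -
    have "((x - a) $ k)\<^sup>2 \<le> (norm (x - a))\<^sup>2"
      using component_le_norm_cart[of "x - a" k] by (simp add: power2_le_iff_abs_le abs_le_iff)
    then show ?thesis using norm_diff_sq_le[of x a] by simp
  qed
  have "\<bar>u * w\<bar> \<le> u\<^sup>2 + w\<^sup>2" for u w :: real
  proof -
    have "2 * \<bar>u\<bar> * \<bar>w\<bar> \<le> u\<^sup>2 + w\<^sup>2"
      using zero_le_power2[of "\<bar>u\<bar> - \<bar>w\<bar>"] by (simp add: power2_diff)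
    moreover have "0 \<le> \<bar>u\<bar> * \<bar>w\<bar>" by simp
    ultimately show ?thesis unfolding abs_mult by linarith
  qed
  then have "norm ((x $ i - a $ i) * (x $ j - a $ j)) \<le> (x $ i - a $ i)\<^sup>2 + (x $ j - a $ j)\<^sup>2"
    by simp
  then show "norm ((x $ i - a $ i) * (x $ j - a $ j)) \<le> 4 * (norm x)\<^sup>2 + 4 * (norm a)\<^sup>2"
    using comp[of i] comp[of j] by linarith
qed (auto intro!: borel_measurable_continuous_onI continuous_intros)

lemma inner_matrix_vector_mult_eq_sum:
  "y \<bullet> ((A::real^'d^'d) *v y) = (\<Sum>i\<in>UNIV. \<Sum>j\<in>UNIV. A$i$j * (y$i * y$j))"
  by (simp add: inner_vec_def matrix_vector_mult_def sum_distrib_left mult_ac)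

lemma integral_centered_quadratic_form:
  assumes P: "P \<in> Q2"
  shows "(\<integral>x. (x - a) \<bullet> ((A::real^'d^'d) *v (x - a)) \<partial>P) =
     (\<Sum>i\<in>UNIV. \<Sum>j\<in>UNIV. A$i$j * (\<integral>x. (x$i - a$i) * (x$j - a$j) \<partial>P))"
  unfolding inner_matrix_vector_mult_eq_sum
  using Q2_integrable_centered_product[OF P]
  by (simp add: Bochner_Integration.integral_sum Bochner_Integration.integrable_sum)

lemma covar_commute: "covar P $ j $ i = covar P $ i $ j"
  by (simp add: covar_def mult.commute)

lemma recon_error_eq_trace:
  assumes P: "P \<in> Q2" and X: "X \<in> stiefel"
  shows "recon_error X P = trace (perp_proj X ** covar P)"
proof -
  have "recon_error X P = (\<integral>x. (x - mean P) \<bullet> (perp_proj X *v (x - mean P)) \<partial>P)"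
    by (simp add: recon_error_def norm_perp_proj_sq[OF X])
  also have "\<dots> = trace (perp_proj X ** covar P)"
    unfolding integral_centered_quadratic_form[OF P] trace_def matrix_matrix_mult_def
    by (simp add: covar_commute) (simp add: covar_def)
  finally show ?thesis .
qed

lemma psd_covar:
  fixes P :: "(real^'d) measure"
  assumes P: "P \<in> Q2"
  shows "psd (covar P)"
proof -
  have "v \<bullet> (covar P *v v) \<ge> 0" for v
  proof -
    define A :: "real^'d^'d" where "A = (\<chi> i j. v$i * v$j)"
    have "v \<bullet> (covar P *v v) = (\<Sum>i\<in>UNIV. \<Sum>j\<in>UNIV. A$i$j * covar P $ i $ j)"
      by (simp add: inner_matrix_vector_mult_eq_sum A_def mult_ac)
    also have "\<dots> = (\<integral>x. (x - mean P) \<bullet> (A *v (x - mean P)) \<partial>P)"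
      by (simp add: integral_centered_quadratic_form[OF P] covar_def)
    also have "\<dots> = (\<integral>x. (v \<bullet> (x - mean P))\<^sup>2 \<partial>P)"
      unfolding inner_matrix_vector_mult_eq_sum
      by (simp add: A_def power2_eq_square inner_vec_def sum_product mult_ac)
    finally show ?thesis by simp
  qed
  then show ?thesis by (simp add: psd_def transpose_def vec_eq_iff covar_commute)
qed

definition transport_cost :: "((real^'d) \<times> (real^'d)) measure \<Rightarrow> real" where
  "transport_cost Q = (\<integral>z. (norm (fst z - snd z))\<^sup>2 \<partial>Q)"

lemma transport_cost_nonneg: "transport_cost Q \<ge> 0"
  unfolding transport_cost_def by (rule integral_nonneg_AE) simp

lemma W2_le_sqrt_transport_cost:
  assumes "Q \<in> couplings P P0"
  shows "W2 P P0 \<le> sqrt (transport_cost Q)"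
proof -
  define K where "K = {transport_cost Q | Q. Q \<in> couplings P P0}"
  have "bdd_below K" unfolding K_def by (rule bdd_belowI[of _ 0]) (auto simp: transport_cost_nonneg)
  then have "Inf K \<le> transport_cost Q" by (rule cInf_lower[rotated]) (use assms in \<open>auto simp: K_def\<close>)
  then show ?thesis by (simp add: W2_def K_def transport_cost_def)
qed

lemma le_W2I:
  assumes "couplings P P0 \<noteq> {}"
    and le: "\<And>Q. Q \<in> couplings P P0 \<Longrightarrow> a \<le> sqrt (transport_cost Q)"
  shows "a \<le> W2 P P0"
proof -
  have "(max a 0)\<^sup>2 \<le> transport_cost Q" if "Q \<in> couplings P P0" for Q
    using power_mono[of "max a 0" "sqrt (transport_cost Q)" 2] le[OF that]
      transport_cost_nonneg[of Q] by simp
  then have "(max a 0)\<^sup>2 \<le> Inf {transport_cost Q | Q. Q \<in> couplings P P0}"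
    using assms(1) by (intro cInf_greatest) auto
  then have "sqrt ((max a 0)\<^sup>2) \<le> W2 P P0"
    unfolding W2_def transport_cost_def by (rule real_sqrt_le_mono)
  then show ?thesis by simp
qed

lemma distr_pair_snd:
  assumes "prob_space M" "prob_space N"
  shows "distr (M \<Otimes>\<^sub>M N) N snd = N"
proof (intro measure_eqI)
  interpret N: prob_space N by fact
  interpret M: prob_space M by fact
  fix A assume "A \<in> sets (distr (M \<Otimes>\<^sub>M N) N snd)"
  then have A: "A \<in> sets N" by simp
  have "emeasure (distr (M \<Otimes>\<^sub>M N) N snd) A = emeasure (M \<Otimes>\<^sub>M N) (space M \<times> A)"
    using A by (auto simp add: emeasure_distr space_pair_measure dest: sets.sets_into_space
        intro!: arg_cong2[where f=emeasure])
  also have "\<dots> = emeasure M (space M) * emeasure N A"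
    using A by (intro N.emeasure_pair_measure_Times) auto
  finally show "emeasure (distr (M \<Otimes>\<^sub>M N) N snd) A = emeasure N A"
    by (simp add: M.emeasure_space_1)
qed simp

lemma sets_pair_borel:
  fixes M :: "'a::second_countable_topology measure" and N :: "'b::second_countable_topology measure"
  shows "sets M = sets borel \<Longrightarrow> sets N = sets borel \<Longrightarrow> sets (M \<Otimes>\<^sub>M N) = sets borel"
  using sets_pair_measure_cong[of M borel N borel] unfolding borel_prod by simp

lemma pair_measure_in_couplings:
  assumes P: "P \<in> Q2" and P0: "P0 \<in> Q2"
  shows "P \<Otimes>\<^sub>M P0 \<in> couplings P P0"
proof -
  have ps: "prob_space P" "prob_space P0" and s: "sets P = sets borel" "sets P0 = sets borel"
    using Q2D P P0 by auto
  have "distr (P \<Otimes>\<^sub>M P0) borel fst = distr (P \<Otimes>\<^sub>M P0) P fst"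
    using s by (intro distr_cong) auto
  also have "\<dots> = P" by (rule prob_space.distr_pair_fst[OF ps(2)])
  moreover have "distr (P \<Otimes>\<^sub>M P0) borel snd = distr (P \<Otimes>\<^sub>M P0) P0 snd"
    using s by (intro distr_cong) auto
  moreover have "\<dots> = P0" by (rule distr_pair_snd[OF ps])
  ultimately show ?thesis
    unfolding couplings_def using sets_pair_borel[OF s] prob_space_pair[OF ps] by auto
qed

lemma
  fixes F :: "real^'d \<Rightarrow> 'b::{banach, second_countable_topology}"
  assumes Q: "Q \<in> couplings P P0" and F: "F \<in> borel_measurable borel"
  shows integrable_coupling_fst: "integrable Q (\<lambda>z. F (fst z)) \<longleftrightarrow> integrable P F"
    and integral_coupling_fst: "(\<integral>z. F (fst z) \<partial>Q) = (\<integral>x. F x \<partial>P)"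
    and integrable_coupling_snd: "integrable Q (\<lambda>z. F (snd z)) \<longleftrightarrow> integrable P0 F"
    and integral_coupling_snd: "(\<integral>z. F (snd z) \<partial>Q) = (\<integral>x. F x \<partial>P0)"
proof -
  have s: "sets Q = sets borel" and d: "distr Q borel fst = P" "distr Q borel snd = P0"
    using Q by (auto simp: couplings_def)
  have m: "fst \<in> measurable Q borel" "snd \<in> measurable Q borel"
    using s by (auto intro!: borel_measurable_if_sets_eq_borel borel_measurable_continuous_onI
        continuous_intros)
  show "integrable Q (\<lambda>z. F (fst z)) \<longleftrightarrow> integrable P F"
    "integrable Q (\<lambda>z. F (snd z)) \<longleftrightarrow> integrable P0 F"
    using integrable_distr_eq[OF m(1) F] integrable_distr_eq[OF m(2) F] d by simp_all
  show "(\<integral>z. F (fst z) \<partial>Q) = (\<integral>x. F x \<partial>P)" "(\<integral>z. F (snd z) \<partial>Q) = (\<integral>x. F x \<partial>P0)"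
    using integral_distr[OF m(1) F] integral_distr[OF m(2) F] d by simp_all
qed

lemma norm_add_sq_le_weighted:
  fixes g h :: "'a::real_normed_vector"
  assumes t: "t > 0"
  shows "(norm (g + h))\<^sup>2 \<le> (1 + t) * (norm g)\<^sup>2 + (1 + 1/t) * (norm h)\<^sup>2"
proof -
  define x y where "x = norm g" and "y = norm h"
  have "(norm (g + h))\<^sup>2 \<le> (x + y)\<^sup>2"
    using norm_triangle_ineq[of g h] by (simp add: x_def y_def power_mono)
  moreover have "t * (2 * x * y) \<le> t * (t * x\<^sup>2 + y\<^sup>2 / t)"
    using zero_le_power2[of "t * x - y"] t
    by (simp add: power2_diff power2_eq_square algebra_simps)
  then have "2 * x * y \<le> t * x\<^sup>2 + y\<^sup>2 / t" using t by simp
  ultimately show ?thesis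
    by (simp add: x_def y_def power2_sum field_simps)
qed

text \<open>Take \<open>t = (c + e) / (b + e)\<close>, the optimal \<open>t = c / b\<close> moved away from \<open>0\<close> and \<open>\<infinity>\<close>,
  and let \<open>e \<rightarrow> 0\<close>.\<close>
lemma le_add_if_sq_le_weighted:
  fixes a b c :: real
  assumes a: "a \<ge> 0" and b: "b \<ge> 0" and c: "c \<ge> 0"
    and H: "\<And>t. t > 0 \<Longrightarrow> a\<^sup>2 \<le> (1 + t) * b\<^sup>2 + (1 + 1/t) * c\<^sup>2"
  shows "a \<le> b + c"
proof -
  have key: "a\<^sup>2 \<le> (b + c)\<^sup>2 + 2 * e * (b + c)" if e: "e > 0" for e
  proof -
    define t where "t = (c + e) / (b + e)"
    have be: "b + e > 0" and ce: "c + e > 0" using b c e by auto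
    then have t: "t > 0" by (simp add: t_def)
    have "(1 + t) * b\<^sup>2 = (b + c + 2*e) * (b\<^sup>2 / (b + e))"
      "(1 + 1/t) * c\<^sup>2 = (b + c + 2*e) * (c\<^sup>2 / (c + e))"
      using be ce by (simp_all add: t_def field_simps)
    moreover have "b\<^sup>2 / (b + e) \<le> b" "c\<^sup>2 / (c + e) \<le> c"
      using b c e be ce by (simp_all add: divide_le_eq power2_eq_square distrib_left)
    then have "(b + c + 2*e) * (b\<^sup>2 / (b + e)) \<le> (b + c + 2*e) * b"
      "(b + c + 2*e) * (c\<^sup>2 / (c + e)) \<le> (b + c + 2*e) * c"
      using b c e by (intro mult_left_mono; simp)+
    ultimately have "a\<^sup>2 \<le> (b + c + 2*e) * b + (b + c + 2*e) * c"
      using H[OF t] by linarith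
    then show ?thesis by (simp add: power2_eq_square algebra_simps)
  qed
  have "a\<^sup>2 \<le> (b + c)\<^sup>2"
  proof (rule field_le_epsilon)
    fix e :: real assume e: "e > 0"
    define e' where "e' = e / (2 * (b + c) + 1)"
    have e': "e' > 0" using e b c by (simp add: e'_def)
    have "2 * e' * (b + c) = e * (2 * (b + c) / (2 * (b + c) + 1))"
      unfolding e'_def by (simp add: divide_simps)
    also have "\<dots> \<le> e" using e b c by (simp add: divide_le_eq)
    finally show "a\<^sup>2 \<le> (b + c)\<^sup>2 + e" using key[OF e'] by linarith
  qed
  then show ?thesis by (rule power2_le_imp_le) (use b c in simp)
qed

lemma L2_norm_triangle_ineq:
  fixes f g :: "'a \<Rightarrow> 'b::{real_normed_vector, second_countable_topology}"
  assumes [measurable]: "f \<in> borel_measurable M" "g \<in> borel_measurable M"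
    and f2: "integrable M (\<lambda>x. (norm (f x))\<^sup>2)" and g2: "integrable M (\<lambda>x. (norm (g x))\<^sup>2)"
  shows "sqrt (\<integral>x. (norm (f x + g x))\<^sup>2 \<partial>M)
    \<le> sqrt (\<integral>x. (norm (f x))\<^sup>2 \<partial>M) + sqrt (\<integral>x. (norm (g x))\<^sup>2 \<partial>M)"
proof -
  have fg2: "integrable M (\<lambda>x. (norm (f x + g x))\<^sup>2)"
  proof (rule Bochner_Integration.integrable_bound)
    show "integrable M (\<lambda>x. (1 + 1) * (norm (f x))\<^sup>2 + (1 + 1/1) * (norm (g x))\<^sup>2)"
      using f2 g2 by simp
    show "AE x in M. norm ((norm (f x + g x))\<^sup>2)
        \<le> norm ((1 + 1) * (norm (f x))\<^sup>2 + (1 + 1/1) * (norm (g x))\<^sup>2)"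
      using norm_add_sq_le_weighted[of 1] by (intro AE_I2) simp
  qed measurable
  define A B C where "A = (\<integral>x. (norm (f x + g x))\<^sup>2 \<partial>M)"
    and "B = (\<integral>x. (norm (f x))\<^sup>2 \<partial>M)" and "C = (\<integral>x. (norm (g x))\<^sup>2 \<partial>M)"
  have nonneg: "A \<ge> 0" "B \<ge> 0" "C \<ge> 0"
    unfolding A_def B_def C_def by (rule integral_nonneg_AE, simp)+
  have "(sqrt A)\<^sup>2 \<le> (1 + t) * (sqrt B)\<^sup>2 + (1 + 1/t) * (sqrt C)\<^sup>2" if t: "t > 0" for t
  proof -
    have "A \<le> (\<integral>x. (1 + t) * (norm (f x))\<^sup>2 + (1 + 1/t) * (norm (g x))\<^sup>2 \<partial>M)"
      unfolding A_def using f2 g2 fg2 norm_add_sq_le_weighted[OF t]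
      by (intro integral_mono) simp_all
    also have "\<dots> = (1 + t) * B + (1 + 1/t) * C"
      unfolding B_def C_def using f2 g2 by simp
    finally show ?thesis unfolding real_sqrt_pow2[OF nonneg(1)] real_sqrt_pow2[OF nonneg(2)]
        real_sqrt_pow2[OF nonneg(3)] .
  qed
  from le_add_if_sq_le_weighted[OF real_sqrt_ge_zero real_sqrt_ge_zero real_sqrt_ge_zero this]
  show ?thesis using nonneg by (simp add: A_def B_def C_def)
qed

lemma (in prob_space) integral_norm_sq_centered:
  fixes w :: "'a \<Rightarrow> 'b::euclidean_space"
  assumes w: "integrable M w" and w2: "integrable M (\<lambda>z. (norm (w z))\<^sup>2)"
  shows "integrable M (\<lambda>z. (norm (w z - integral\<^sup>L M w))\<^sup>2)"
    and "(\<integral>z. (norm (w z - integral\<^sup>L M w))\<^sup>2 \<partial>M) = (\<integral>z. (norm (w z))\<^sup>2 \<partial>M) - (norm (integral\<^sup>L M w))\<^sup>2"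
proof -
  define \<delta> where "\<delta> = integral\<^sup>L M w"
  have expand: "(norm (w z - \<delta>))\<^sup>2 = (norm (w z))\<^sup>2 - 2 * (\<delta> \<bullet> w z) + (norm \<delta>)\<^sup>2" for z
    by (simp add: power2_norm_eq_inner inner_diff_left inner_diff_right inner_commute)
  show "integrable M (\<lambda>z. (norm (w z - integral\<^sup>L M w))\<^sup>2)"
    unfolding \<delta>_def[symmetric] expand using w w2 by simp
  show "(\<integral>z. (norm (w z - integral\<^sup>L M w))\<^sup>2 \<partial>M) = (\<integral>z. (norm (w z))\<^sup>2 \<partial>M) - (norm (integral\<^sup>L M w))\<^sup>2"
    unfolding \<delta>_def[symmetric] expand using w w2
    by (simp add: prob_space \<delta>_def power2_norm_eq_inner)
qed

lemma
  fixes P P0 :: "(real^'d) measure"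
  assumes P: "P \<in> Q2" and P0: "P0 \<in> Q2" and Q: "Q \<in> couplings P P0"
  shows integrable_coupling_diff: "integrable Q (\<lambda>z. fst z - snd z)"
    and integral_coupling_diff: "(\<integral>z. fst z - snd z \<partial>Q) = mean P - mean P0"
    and integrable_coupling_diff_sq: "integrable Q (\<lambda>z. (norm (fst z - snd z))\<^sup>2)"
proof -
  have borel: "(\<lambda>x::real^'d. x) \<in> borel_measurable borel"
    "(\<lambda>x::real^'d. (norm x)\<^sup>2) \<in> borel_measurable borel"
    "(\<lambda>z::(real^'d) \<times> (real^'d). (norm (fst z - snd z))\<^sup>2) \<in> borel_measurable borel"
    by (auto intro!: borel_measurable_continuous_onI continuous_intros)
  have "integrable Q (\<lambda>z. fst z)" "integrable Q (\<lambda>z. snd z)"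
    "(\<integral>z. fst z \<partial>Q) = mean P" "(\<integral>z. snd z \<partial>Q) = mean P0"
    using integrable_coupling_fst[OF Q borel(1)] integrable_coupling_snd[OF Q borel(1)]
      integral_coupling_fst[OF Q borel(1)] integral_coupling_snd[OF Q borel(1)]
      Q2_integrable_id[OF P] Q2_integrable_id[OF P0]
    by (simp_all add: mean_def)
  then show "integrable Q (\<lambda>z. fst z - snd z)" "(\<integral>z. fst z - snd z \<partial>Q) = mean P - mean P0"
    by (simp_all add: Bochner_Integration.integral_diff)
  have "integrable Q (\<lambda>z. 2 * (norm (fst z))\<^sup>2 + 2 * (norm (snd z))\<^sup>2)"
    using integrable_coupling_fst[OF Q borel(2)] integrable_coupling_snd[OF Q borel(2)]
      Q2D(3)[OF P] Q2D(3)[OF P0]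
    by simp
  moreover have "(\<lambda>z. (norm (fst z - snd z))\<^sup>2) \<in> borel_measurable Q"
    using Q borel(3) by (simp add: couplings_def borel_measurable_if_sets_eq_borel)
  ultimately show "integrable Q (\<lambda>z. (norm (fst z - snd z))\<^sup>2)"
    by (rule Bochner_Integration.integrable_bound) (simp add: norm_diff_sq_le)
qed

lemma sqrt_recon_error_le_coupling:
  fixes P P0 :: "(real^'d) measure" and X :: "real^'r^'d"
  assumes P: "P \<in> Q2" and P0: "P0 \<in> Q2" and X: "X \<in> stiefel" and Q: "Q \<in> couplings P P0"
  shows "sqrt (recon_error X P) \<le> sqrt (recon_error X P0) + sqrt (transport_cost Q)"
proof -
  let ?\<Pi> = "perp_proj X"
  define w :: "(real^'d) \<times> (real^'d) \<Rightarrow> real^'d" where "w = (\<lambda>z. fst z - snd z)"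
  define \<delta> where "\<delta> = mean P - mean P0"
  interpret Q: prob_space Q using Q by (simp add: couplings_def)
  have "(\<lambda>z. ?\<Pi> *v (snd z - mean P0)) \<in> borel_measurable borel"
    "(\<lambda>z. ?\<Pi> *v (w z - \<delta>)) \<in> borel_measurable borel"
    "(\<lambda>z. (norm (?\<Pi> *v (w z - \<delta>)))\<^sup>2) \<in> borel_measurable borel"
    by (auto simp: w_def intro!: borel_measurable_continuous_onI continuous_intros)
  then have meas: "(\<lambda>z. ?\<Pi> *v (snd z - mean P0)) \<in> borel_measurable Q"
    "(\<lambda>z. ?\<Pi> *v (w z - \<delta>)) \<in> borel_measurable Q"
    "(\<lambda>z. (norm (?\<Pi> *v (w z - \<delta>)))\<^sup>2) \<in> borel_measurable Q"
    using Q by (auto simp: couplings_def intro: borel_measurable_if_sets_eq_borel)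
  have centered: "integrable Q (\<lambda>z. (norm (w z - \<delta>))\<^sup>2)"
    "(\<integral>z. (norm (w z - \<delta>))\<^sup>2 \<partial>Q) \<le> transport_cost Q"
    using Q.integral_norm_sq_centered[of w] unfolding w_def \<delta>_def
    by (simp_all add: integrable_coupling_diff[OF P P0 Q] integral_coupling_diff[OF P P0 Q]
        integrable_coupling_diff_sq[OF P P0 Q] transport_cost_def)
  have int_w: "integrable Q (\<lambda>z. (norm (?\<Pi> *v (w z - \<delta>)))\<^sup>2)"
    using centered(1) by (rule Bochner_Integration.integrable_bound[OF _ meas(3)])
      (simp add: power_mono norm_perp_proj_le[OF X])
  have sq_meas: "(\<lambda>x. (norm (?\<Pi> *v (x - m)))\<^sup>2) \<in> borel_measurable borel" for m
    by (auto intro!: borel_measurable_continuous_onI continuous_intros)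
  have int_0: "integrable Q (\<lambda>z. (norm (?\<Pi> *v (snd z - mean P0)))\<^sup>2)"
    using integrable_coupling_snd[OF Q sq_meas] Q2_integrable_centered_sq[OF P0 X] by simp
  have "recon_error X P = (\<integral>z. (norm (?\<Pi> *v (fst z - mean P)))\<^sup>2 \<partial>Q)"
    using integral_coupling_fst[OF Q sq_meas] by (simp add: recon_error_def)
  also have "\<dots> = (\<integral>z. (norm (?\<Pi> *v (snd z - mean P0) + ?\<Pi> *v (w z - \<delta>)))\<^sup>2 \<partial>Q)"
  proof -
    have "fst z - mean P = (snd z - mean P0) + (w z - \<delta>)" for z by (simp add: w_def \<delta>_def)
    then show ?thesis by (simp only: matrix_vector_right_distrib)
  qed
  finally have "sqrt (recon_error X P)
      \<le> sqrt (\<integral>z. (norm (?\<Pi> *v (snd z - mean P0)))\<^sup>2 \<partial>Q)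
        + sqrt (\<integral>z. (norm (?\<Pi> *v (w z - \<delta>)))\<^sup>2 \<partial>Q)"
    using L2_norm_triangle_ineq[OF meas(1,2) int_0 int_w] by simp
  moreover have "sqrt (\<integral>z. (norm (?\<Pi> *v (snd z - mean P0)))\<^sup>2 \<partial>Q) = sqrt (recon_error X P0)"
    using integral_coupling_snd[OF Q sq_meas] by (simp add: recon_error_def)
  moreover have "(\<integral>z. (norm (?\<Pi> *v (w z - \<delta>)))\<^sup>2 \<partial>Q) \<le> (\<integral>z. (norm (w z - \<delta>))\<^sup>2 \<partial>Q)"
    using int_w centered(1) norm_perp_proj_le[OF X] by (intro integral_mono) (simp_all add: power_mono)
  then have "sqrt (\<integral>z. (norm (?\<Pi> *v (w z - \<delta>)))\<^sup>2 \<partial>Q) \<le> sqrt (transport_cost Q)"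
    using centered(2) by simp
  ultimately show ?thesis by linarith
qed

lemma recon_error_le_of_W2_le:
  fixes P P0 :: "(real^'d) measure" and X :: "real^'r^'d"
  assumes P: "P \<in> Q2" and P0: "P0 \<in> Q2" and X: "X \<in> stiefel" and W: "W2 P P0 \<le> \<rho>"
  shows "recon_error X P \<le> (sqrt (recon_error X P0) + \<rho>)\<^sup>2"
proof -
  have "sqrt (recon_error X P) - sqrt (recon_error X P0) \<le> W2 P P0"
    using pair_measure_in_couplings[OF P P0] sqrt_recon_error_le_coupling[OF P P0 X]
    by (intro le_W2I) (auto simp: algebra_simps)
  then have "sqrt (recon_error X P) \<le> sqrt (recon_error X P0) + \<rho>" using W by linarith
  then have "(sqrt (recon_error X P))\<^sup>2 \<le> (sqrt (recon_error X P0) + \<rho>)\<^sup>2"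
    by (rule power_mono) (simp add: recon_error_nonneg)
  then show ?thesis by (simp add: recon_error_nonneg)
qed

definition coin :: "bool measure" where
  "coin = measure_pmf (bernoulli_pmf (1/2))"

lemma prob_space_coin: "prob_space coin"
  unfolding coin_def by (rule prob_space_measure_pmf)

lemma
  fixes f :: "bool \<Rightarrow> 'b::{banach, second_countable_topology}"
  shows integrable_coin: "integrable coin f"
    and integral_coin: "(\<integral>b. f b \<partial>coin) = (1/2) *\<^sub>R (f True + f False)"
proof -
  show "integrable coin f" unfolding coin_def by (rule integrable_measure_pmf_finite) simp
  have "(\<integral>b. f b \<partial>coin) = (\<Sum>a\<in>UNIV. pmf (bernoulli_pmf (1/2)) a *\<^sub>R f a)"
    unfolding coin_def by (rule integral_measure_pmf) auto
  then show "(\<integral>b. f b \<partial>coin) = (1/2) *\<^sub>R (f True + f False)"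
    by (simp add: UNIV_bool scaleR_add_right)
qed

lemma measurable_pair_coin:
  assumes "\<And>b. (\<lambda>x. G x b) \<in> borel_measurable M"
  shows "(\<lambda>z. G (fst z) (snd z)) \<in> borel_measurable (M \<Otimes>\<^sub>M coin)"
proof -
  have "{z \<in> space (M \<Otimes>\<^sub>M coin). snd z} = snd -` {True} \<inter> space (M \<Otimes>\<^sub>M coin)" by auto
  also have "\<dots> \<in> sets (M \<Otimes>\<^sub>M coin)"
    by (rule measurable_sets[OF measurable_snd]) (simp add: coin_def)
  finally have "{z \<in> space (M \<Otimes>\<^sub>M coin). snd z} \<in> sets (M \<Otimes>\<^sub>M coin)" .
  moreover have "(\<lambda>z. G (fst z) (snd z)) = (\<lambda>z. if snd z then G (fst z) True else G (fst z) False)"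
    by (auto simp: fun_eq_iff)
  ultimately show ?thesis
    using assms by (auto intro!: measurable_If measurable_compose[OF measurable_fst])
qed

lemma
  fixes G :: "'a \<Rightarrow> bool \<Rightarrow> 'b::{banach, second_countable_topology}"
  assumes M: "prob_space M"
    and meas: "\<And>b. (\<lambda>x. G x b) \<in> borel_measurable M"
    and int: "\<And>b. integrable M (\<lambda>x. G x b)"
  shows integrable_pair_coin: "integrable (M \<Otimes>\<^sub>M coin) (\<lambda>z. G (fst z) (snd z))"
    and integral_pair_coin:
      "(\<integral>z. G (fst z) (snd z) \<partial>(M \<Otimes>\<^sub>M coin)) = (\<integral>x. (1/2) *\<^sub>R (G x True + G x False) \<partial>M)"
proof -
  interpret M: prob_space M by (rule M)
  interpret C: prob_space coin by (rule prob_space_coin)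
  interpret pair_sigma_finite M coin ..
  show int2: "integrable (M \<Otimes>\<^sub>M coin) (\<lambda>z. G (fst z) (snd z))"
  proof (rule Fubini_integrable[OF measurable_pair_coin[OF meas]])
    show "integrable M (\<lambda>x. \<integral>y. norm (G (fst (x, y)) (snd (x, y))) \<partial>coin)"
      using int by (simp add: integral_coin)
  qed (simp add: integrable_coin)
  show "(\<integral>z. G (fst z) (snd z) \<partial>(M \<Otimes>\<^sub>M coin)) = (\<integral>x. (1/2) *\<^sub>R (G x True + G x False) \<partial>M)"
    using integral_fst'[OF int2] by (simp add: integral_coin)
qed

definition coin_mixture :: "'a measure \<Rightarrow> ('a \<Rightarrow> bool \<Rightarrow> 'b::topological_space) \<Rightarrow> 'b measure" where
  "coin_mixture M \<Phi> = distr (M \<Otimes>\<^sub>M coin) borel (\<lambda>z. \<Phi> (fst z) (snd z))"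

lemma sets_coin_mixture[simp]: "sets (coin_mixture M \<Phi>) = sets borel"
  by (simp add: coin_mixture_def)

lemma prob_space_coin_mixture:
  assumes "prob_space M" "\<And>b. (\<lambda>x. \<Phi> x b) \<in> borel_measurable M"
  shows "prob_space (coin_mixture M \<Phi>)"
  unfolding coin_mixture_def
  using assms by (intro prob_space.prob_space_distr prob_space_pair prob_space_coin
      measurable_pair_coin)

lemma
  fixes f :: "'b::topological_space \<Rightarrow> 'c::{banach, second_countable_topology}"
  assumes M: "prob_space M" and \<Phi>: "\<And>b. (\<lambda>x. \<Phi> x b) \<in> borel_measurable M"
    and f: "f \<in> borel_measurable borel" and int: "\<And>b. integrable M (\<lambda>x. f (\<Phi> x b))"
  shows integrable_coin_mixture: "integrable (coin_mixture M \<Phi>) f"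
    and integral_coin_mixture:
      "(\<integral>y. f y \<partial>coin_mixture M \<Phi>) = (\<integral>x. (1/2) *\<^sub>R (f (\<Phi> x True) + f (\<Phi> x False)) \<partial>M)"
proof -
  have m: "(\<lambda>z. \<Phi> (fst z) (snd z)) \<in> measurable (M \<Otimes>\<^sub>M coin) borel"
    by (rule measurable_pair_coin[OF \<Phi>])
  have mf: "(\<lambda>x. f (\<Phi> x b)) \<in> borel_measurable M" for b
    using measurable_compose[OF \<Phi> f] by simp
  show "integrable (coin_mixture M \<Phi>) f"
    unfolding coin_mixture_def integrable_distr_eq[OF m f]
    by (rule integrable_pair_coin[OF M mf int])
  show "(\<integral>y. f y \<partial>coin_mixture M \<Phi>) = (\<integral>x. (1/2) *\<^sub>R (f (\<Phi> x True) + f (\<Phi> x False)) \<partial>M)"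
    unfolding coin_mixture_def integral_distr[OF m f]
    by (rule integral_pair_coin[OF M mf int])
qed

lemma coin_mixture_graph_in_couplings:
  fixes M :: "(real^'d) measure"
  assumes M: "prob_space M" "sets M = sets borel"
    and \<Phi>: "\<And>b. (\<lambda>x. \<Phi> x b) \<in> borel_measurable borel"
  shows "coin_mixture M (\<lambda>x b. (\<Phi> x b, x)) \<in> couplings (coin_mixture M \<Phi>) M"
proof -
  have \<Phi>M: "(\<lambda>x. \<Phi> x b) \<in> borel_measurable M" for b
    by (rule borel_measurable_if_sets_eq_borel[OF M(2) \<Phi>])
  have graph: "(\<lambda>x. (\<Phi> x b, x)) \<in> borel_measurable M" for b
    using \<Phi>M by (intro borel_measurable_Pair) (simp_all add: borel_measurable_if_sets_eq_borel[OF M(2)])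
  have m: "(\<lambda>z. (\<Phi> (fst z) (snd z), fst z)) \<in> measurable (M \<Otimes>\<^sub>M coin) borel"
    by (rule measurable_pair_coin[OF graph])
  have proj: "fst \<in> borel_measurable (borel :: ((real^'d) \<times> (real^'d)) measure)"
    "snd \<in> borel_measurable (borel :: ((real^'d) \<times> (real^'d)) measure)"
    by (auto intro!: borel_measurable_continuous_onI continuous_intros)
  have "distr (coin_mixture M (\<lambda>x b. (\<Phi> x b, x))) borel fst = coin_mixture M \<Phi>"
    unfolding coin_mixture_def by (simp add: distr_distr[OF proj(1) m] o_def)
  moreover have "distr (coin_mixture M (\<lambda>x b. (\<Phi> x b, x))) borel snd = M"
  proof -
    have "distr (coin_mixture M (\<lambda>x b. (\<Phi> x b, x))) borel snd = distr (M \<Otimes>\<^sub>M coin) M fst"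
      unfolding coin_mixture_def
      by (simp add: distr_distr[OF proj(2) m] o_def M(2) cong: distr_cong)
    also have "\<dots> = M" by (rule prob_space.distr_pair_fst[OF prob_space_coin])
    finally show ?thesis .
  qed
  ultimately show ?thesis
    using prob_space_coin_mixture[OF M(1) graph] by (simp add: couplings_def)
qed

text \<open>The worst-case perturbation of \<open>x\<close>; the sign \<open>b\<close> of the shift will be a fair coin.\<close>
definition spread :: "real^'r^'d \<Rightarrow> real^'d \<Rightarrow> real^'d \<Rightarrow> real \<Rightarrow> real^'d \<Rightarrow> bool \<Rightarrow> real^'d" where
  "spread X m u c x b = x + c *\<^sub>R (perp_proj X *v (x - m)) + (if b then u else - u)"

lemma borel_measurable_spread: "(\<lambda>x. spread X m u c x b) \<in> borel_measurable borel"
  unfolding spread_def by (auto intro!: borel_measurable_continuous_onI continuous_intros)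

lemma norm_spread_sub_le:
  assumes X: "X \<in> stiefel" and c: "c \<ge> 0"
  shows "norm (spread X m u c x b - x) \<le> c * norm x + (c * norm m + norm u)"
proof -
  have "norm (perp_proj X *v (x - m)) \<le> norm x + norm m"
    using norm_perp_proj_le[OF X, of "x - m"] norm_triangle_ineq4[of x m] by linarith
  then have "norm (c *\<^sub>R (perp_proj X *v (x - m))) \<le> c * norm x + c * norm m"
    using c by (simp add: mult_left_mono distrib_left[symmetric])
  moreover have "spread X m u c x b - x = c *\<^sub>R (perp_proj X *v (x - m)) + (if b then u else - u)"
    by (simp add: spread_def)
  moreover have "norm (if b then u else - u) = norm u" by simp
  ultimately show ?thesis
    using norm_triangle_ineq[of "c *\<^sub>R (perp_proj X *v (x - m))" "if b then u else - u"] by simp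
qed

lemma norm_spread_le:
  assumes "X \<in> stiefel" "c \<ge> 0"
  shows "norm (spread X m u c x b) \<le> (1 + c) * norm x + (c * norm m + norm u)"
  using norm_spread_sub_le[OF assms, of m u x b] norm_triangle_ineq[of x "spread X m u c x b - x"]
  by (simp add: algebra_simps)

lemma perp_proj_spread:
  assumes X: "X \<in> stiefel" and u: "perp_proj X *v u = u"
  shows "perp_proj X *v (spread X m u c x b - m)
    = (1 + c) *\<^sub>R (perp_proj X *v (x - m)) + (if b then u else - u)"
proof -
  define y s where "y = x - m" and "s = (if b then u else - u)"
  have "perp_proj X *v s = s"
    using u by (simp add: s_def linear_neg[OF matrix_vector_mul_linear])
  moreover have "spread X m u c x b - m = y + c *\<^sub>R (perp_proj X *v y) + s"
    by (simp add: spread_def y_def s_def)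
  ultimately have "perp_proj X *v (spread X m u c x b - m) = perp_proj X *v y + c *\<^sub>R (perp_proj X *v y) + s"
    by (simp add: matrix_vector_right_distrib matrix_vector_mult_scaleR perp_proj_perp_proj_apply[OF X])
  then show ?thesis by (simp add: y_def s_def scaleR_add_left)
qed

lemma parallelogram_law:
  fixes a u :: "'a::real_inner"
  shows "(norm (a + u))\<^sup>2 + (norm (a - u))\<^sup>2 = 2 * ((norm a)\<^sup>2 + (norm u)\<^sup>2)"
  by (simp add: power2_norm_eq_inner inner_add_left inner_add_right inner_diff_left
      inner_diff_right inner_commute)

lemma spread_law_in_Q2:
  fixes P0 :: "(real^'d) measure" and X :: "real^'r^'d"
  assumes P0: "P0 \<in> Q2" and X: "X \<in> stiefel" and c: "c \<ge> 0"
  shows "coin_mixture P0 (spread X m u c) \<in> Q2"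
proof -
  have s: "sets P0 = sets borel" and ps: "prob_space P0" using Q2D[OF P0] by auto
  have "integrable P0 (\<lambda>x. (norm (spread X m u c x b))\<^sup>2)" for b
    using Q2_integrable_linear_growth(2)[OF P0 borel_measurable_spread norm_spread_le[OF X c]] c
    by simp
  then have "integrable (coin_mixture P0 (spread X m u c)) (\<lambda>y. (norm y)\<^sup>2)"
    using borel_measurable_if_sets_eq_borel[OF s borel_measurable_spread]
    by (intro integrable_coin_mixture[OF ps]) auto
  then show ?thesis
    using prob_space_coin_mixture[OF ps borel_measurable_if_sets_eq_borel[OF s borel_measurable_spread]]
    by (simp add: Q2_def)
qed

lemma mean_spread_law:
  fixes P0 :: "(real^'d) measure" and X :: "real^'r^'d"
  assumes P0: "P0 \<in> Q2" and X: "X \<in> stiefel" and c: "c \<ge> 0"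
  shows "mean (coin_mixture P0 (spread X (mean P0) u c)) = mean P0"
proof -
  let ?m = "mean P0" and ?\<Pi> = "perp_proj X"
  interpret P0: prob_space P0 using Q2D[OF P0] by simp
  have s: "sets P0 = sets borel" using Q2D[OF P0] by simp
  have ix: "integrable P0 (\<lambda>x. x - ?m)" using Q2_integrable_id[OF P0] by simp
  have "(\<integral>x. ?\<Pi> *v (x - ?m) \<partial>P0) = ?\<Pi> *v (\<integral>x. x - ?m \<partial>P0)"
    by (rule integral_bounded_linear[OF matrix_vector_mul_bounded_linear ix])
  also have "\<dots> = 0"
    using Q2_integrable_id[OF P0] by (simp add: Bochner_Integration.integral_diff mean_def P0.prob_space)
  finally have centered: "(\<integral>x. ?\<Pi> *v (x - ?m) \<partial>P0) = 0" .
  have avg: "(1/2) *\<^sub>R (spread X ?m u c x True + spread X ?m u c x False) = x + c *\<^sub>R (?\<Pi> *v (x - ?m))"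
    for x
    by (simp add: spread_def scaleR_add_right[symmetric] scaleR_2[symmetric] algebra_simps)
  have "mean (coin_mixture P0 (spread X ?m u c))
      = (\<integral>x. (1/2) *\<^sub>R (spread X ?m u c x True + spread X ?m u c x False) \<partial>P0)"
    unfolding mean_def[of "coin_mixture P0 (spread X ?m u c)"]
    using borel_measurable_if_sets_eq_borel[OF s borel_measurable_spread]
      Q2_integrable_linear_growth(1)[OF P0 borel_measurable_spread norm_spread_le[OF X c]] c
    by (intro integral_coin_mixture[where f="\<lambda>y. y"]) (auto simp: Q2D[OF P0])
  also have "\<dots> = (\<integral>x. x + c *\<^sub>R (?\<Pi> *v (x - ?m)) \<partial>P0)"
    by (simp only: avg)
  also have "\<dots> = (\<integral>x. x \<partial>P0) + (\<integral>x. c *\<^sub>R (?\<Pi> *v (x - ?m)) \<partial>P0)"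
    using Q2_integrable_id[OF P0] integrable_bounded_linear[OF matrix_vector_mul_bounded_linear ix]
    by (intro Bochner_Integration.integral_add Bochner_Integration.integrable_scaleR_right) auto
  also have "\<dots> = ?m" by (simp add: centered) (simp add: mean_def)
  finally show ?thesis .
qed

lemma recon_error_spread_law:
  fixes P0 :: "(real^'d) measure" and X :: "real^'r^'d"
  assumes P0: "P0 \<in> Q2" and X: "X \<in> stiefel" and c: "c \<ge> 0" and u: "perp_proj X *v u = u"
  shows "recon_error X (coin_mixture P0 (spread X (mean P0) u c))
    = (1 + c)\<^sup>2 * recon_error X P0 + (norm u)\<^sup>2"
proof -
  let ?m = "mean P0" and ?\<Pi> = "perp_proj X"
  interpret P0: prob_space P0 using Q2D[OF P0] by simp
  have s: "sets P0 = sets borel" using Q2D[OF P0] by simp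
  define f where "f y = (norm (?\<Pi> *v (y - ?m)))\<^sup>2" for y
  have f: "f \<in> borel_measurable borel"
    unfolding f_def by (auto intro!: borel_measurable_continuous_onI continuous_intros)
  have avg: "(1/2) *\<^sub>R (f (spread X ?m u c x True) + f (spread X ?m u c x False))
      = (1 + c)\<^sup>2 * (norm (?\<Pi> *v (x - ?m)))\<^sup>2 + (norm u)\<^sup>2" for x
    using parallelogram_law[of "(1 + c) *\<^sub>R (?\<Pi> *v (x - ?m))" u]
    by (simp add: f_def perp_proj_spread[OF X u] power_mult_distrib)
  have bound: "norm (?\<Pi> *v (spread X ?m u c x b - ?m)) \<le> (1 + c) * norm x + (c * norm ?m + norm u + norm ?m)"
    for x b
    using norm_perp_proj_le[OF X, of "spread X ?m u c x b - ?m"] norm_spread_le[OF X c, of ?m u x b]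
      norm_triangle_ineq4[of "spread X ?m u c x b" ?m]
    by linarith
  have "(\<lambda>x. ?\<Pi> *v (spread X ?m u c x b - ?m)) \<in> borel_measurable borel" for b
    by (auto intro!: borel_measurable_continuous_onI continuous_intros simp: spread_def)
  then have "integrable P0 (\<lambda>x. f (spread X ?m u c x b))" for b
    unfolding f_def by (rule Q2_integrable_linear_growth(2)[OF P0 _ bound]) (use c in simp)
  then have "recon_error X (coin_mixture P0 (spread X ?m u c))
      = (\<integral>x. (1/2) *\<^sub>R (f (spread X ?m u c x True) + f (spread X ?m u c x False)) \<partial>P0)"
    unfolding recon_error_def mean_spread_law[OF P0 X c] f_def[symmetric]
    using borel_measurable_if_sets_eq_borel[OF s borel_measurable_spread]
    by (intro integral_coin_mixture[OF _ _ f]) (auto simp: Q2D[OF P0])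
  also have "\<dots> = (\<integral>x. (1 + c)\<^sup>2 * (norm (?\<Pi> *v (x - ?m)))\<^sup>2 + (norm u)\<^sup>2 \<partial>P0)"
    by (simp only: avg)
  also have "\<dots> = (1 + c)\<^sup>2 * recon_error X P0 + (norm u)\<^sup>2"
    using Q2_integrable_centered_sq[OF P0 X] by (simp add: recon_error_def P0.prob_space)
  finally show ?thesis .
qed

lemma transport_cost_spread_coupling:
  fixes P0 :: "(real^'d) measure" and X :: "real^'r^'d"
  assumes P0: "P0 \<in> Q2" and X: "X \<in> stiefel" and c: "c \<ge> 0"
  shows "transport_cost (coin_mixture P0 (\<lambda>x b. (spread X (mean P0) u c x b, x)))
    = c\<^sup>2 * recon_error X P0 + (norm u)\<^sup>2"
proof -
  let ?m = "mean P0" and ?\<Pi> = "perp_proj X"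
  interpret P0: prob_space P0 using Q2D[OF P0] by simp
  have s: "sets P0 = sets borel" using Q2D[OF P0] by simp
  define f where "f z = (norm (fst z - snd z))\<^sup>2" for z :: "(real^'d) \<times> (real^'d)"
  have f: "f \<in> borel_measurable borel"
    unfolding f_def by (auto intro!: borel_measurable_continuous_onI continuous_intros)
  have diff: "spread X ?m u c x b - x = c *\<^sub>R (?\<Pi> *v (x - ?m)) + (if b then u else - u)" for x b
    by (simp add: spread_def)
  have avg: "(1/2) *\<^sub>R (f (spread X ?m u c x True, x) + f (spread X ?m u c x False, x))
      = c\<^sup>2 * (norm (?\<Pi> *v (x - ?m)))\<^sup>2 + (norm u)\<^sup>2" for x
    using parallelogram_law[of "c *\<^sub>R (?\<Pi> *v (x - ?m))" u]
    by (simp add: f_def diff power_mult_distrib)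
  have "(\<lambda>x. spread X ?m u c x b - x) \<in> borel_measurable borel" for b
    by (auto intro!: borel_measurable_continuous_onI continuous_intros simp: spread_def)
  then have "integrable P0 (\<lambda>x. f (spread X ?m u c x b, x))" for b
    unfolding f_def fst_conv snd_conv
    by (rule Q2_integrable_linear_growth(2)[OF P0 _ norm_spread_sub_le[OF X c]]) (use c in simp)
  moreover have "(\<lambda>x. (spread X ?m u c x b, x)) \<in> borel_measurable P0" for b
    by (rule borel_measurable_if_sets_eq_borel[OF s])
      (auto intro!: borel_measurable_continuous_onI continuous_intros simp: spread_def)
  ultimately have "transport_cost (coin_mixture P0 (\<lambda>x b. (spread X ?m u c x b, x)))
      = (\<integral>x. (1/2) *\<^sub>R (f (spread X ?m u c x True, x) + f (spread X ?m u c x False, x)) \<partial>P0)"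
    unfolding transport_cost_def f_def[symmetric]
    by (intro integral_coin_mixture[OF _ _ f]) (auto simp: Q2D[OF P0])
  also have "\<dots> = (\<integral>x. c\<^sup>2 * (norm (?\<Pi> *v (x - ?m)))\<^sup>2 + (norm u)\<^sup>2 \<partial>P0)"
    by (simp only: avg)
  also have "\<dots> = c\<^sup>2 * recon_error X P0 + (norm u)\<^sup>2"
    using Q2_integrable_centered_sq[OF P0 X] by (simp add: recon_error_def P0.prob_space)
  finally show ?thesis .
qed

lemma W2_spread_law_le:
  fixes P0 :: "(real^'d) measure" and X :: "real^'r^'d"
  assumes P0: "P0 \<in> Q2" and X: "X \<in> stiefel" and c: "c \<ge> 0"
  shows "W2 (coin_mixture P0 (spread X (mean P0) u c)) P0 \<le> sqrt (c\<^sup>2 * recon_error X P0 + (norm u)\<^sup>2)"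
proof -
  have "coin_mixture P0 (\<lambda>x b. (spread X (mean P0) u c x b, x))
      \<in> couplings (coin_mixture P0 (spread X (mean P0) u c)) P0"
    using Q2D[OF P0] borel_measurable_spread by (intro coin_mixture_graph_in_couplings) auto
  from W2_le_sqrt_transport_cost[OF this] show ?thesis
    by (simp add: transport_cost_spread_coupling[OF P0 X c])
qed

text \<open>If the residual variance \<open>T\<close> is positive, stretching the residual by \<open>1 + \<rho> / sqrt T\<close>
  spends the whole budget \<open>\<rho>\<close>; otherwise the budget is spent on a shift \<open>\<plusminus>\<rho> v\<close> orthogonal
  to the columns of \<open>X\<close>.\<close>
lemma phi_eq:
  fixes P0 :: "(real^'d) measure" and X :: "real^'r^'d"
  assumes rd: "CARD('r) < CARD('d)" and P0: "P0 \<in> Q2" and rho: "\<rho> \<ge> 0" and X: "X \<in> stiefel"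
  shows "phi P0 \<rho> X = (sqrt (recon_error X P0) + \<rho>)\<^sup>2"
proof -
  define T where "T = recon_error X P0"
  have T: "T \<ge> 0" by (simp add: T_def recon_error_nonneg)
  obtain v where v: "norm v = 1" "perp_proj X *v v = v"
    using perp_proj_fixes_unit_vector[OF rd] by blast
  define c where "c = (if T > 0 then \<rho> / sqrt T else 0)"
  define u where "u = (if T > 0 then 0 else \<rho> *\<^sub>R v)"
  define P where "P = coin_mixture P0 (spread X (mean P0) u c)"
  have c: "c \<ge> 0" using rho by (simp add: c_def)
  have u: "perp_proj X *v u = u" using v by (simp add: u_def matrix_vector_mult_scaleR)
  have "(1 + c)\<^sup>2 * T + (norm u)\<^sup>2 = (sqrt T + \<rho>)\<^sup>2 \<and> c\<^sup>2 * T + (norm u)\<^sup>2 = \<rho>\<^sup>2"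
  proof (cases "T > 0")
    case True
    then have "(1 + c) * sqrt T = sqrt T + \<rho>" by (simp add: c_def distrib_right)
    then have "(1 + c)\<^sup>2 * T = (sqrt T + \<rho>)\<^sup>2"
      using T by (metis power_mult_distrib real_sqrt_pow2)
    then show ?thesis using True by (simp add: u_def c_def power_divide)
  next
    case False
    then show ?thesis using T rho v(1) by (simp add: u_def c_def)
  qed
  then have "recon_error X P = (sqrt T + \<rho>)\<^sup>2" and "W2 P P0 \<le> \<rho>"
    using recon_error_spread_law[OF P0 X c u] W2_spread_law_le[OF P0 X c, of u] rho
    by (simp_all add: P_def T_def)
  moreover have "P \<in> Q2" unfolding P_def by (rule spread_law_in_Q2[OF P0 X c])
  ultimately have "(sqrt T + \<rho>)\<^sup>2 \<in> {recon_error X P | P. P \<in> Q2 \<and> W2 P P0 \<le> \<rho>}"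
    by (metis (mono_tags, lifting) mem_Collect_eq)
  moreover have "\<forall>y \<in> {recon_error X P | P. P \<in> Q2 \<and> W2 P P0 \<le> \<rho>}. y \<le> (sqrt T + \<rho>)\<^sup>2"
    using recon_error_le_of_W2_le[OF _ P0 X] by (auto simp: T_def)
  ultimately show ?thesis
    unfolding phi_eq_Sup_recon_error T_def[symmetric] by (intro cSup_eq_maximum) auto
qed

lemma phi_eq_trace:
  fixes P0 :: "(real^'d) measure" and X :: "real^'r^'d"
  assumes "CARD('r) < CARD('d)" and P0: "P0 \<in> Q2" and "\<rho> \<ge> 0" and X: "X \<in> stiefel"
  shows "phi P0 \<rho> X = (sqrt (trace (perp_proj X ** covar P0)) + \<rho>)\<^sup>2"
  using phi_eq[OF assms] by (simp add: recon_error_eq_trace[OF P0 X])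

lemma phi_eq_trace_frob:
  fixes P0 :: "(real^'d) measure" and X :: "real^'r^'d"
  assumes "CARD('r) < CARD('d)" and P0: "P0 \<in> Q2" and "\<rho> \<ge> 0" and X: "X \<in> stiefel"
  shows "phi P0 \<rho> X = trace (perp_proj X ** covar P0)
    + 2 * \<rho> * frob (perp_proj X ** psd_sqrt (covar P0)) + \<rho>\<^sup>2"
  using phi_eq_trace[OF assms] recon_error_nonneg[of X P0]
  by (simp add: frob_perp_proj_psd_sqrt[OF X psd_covar[OF P0]] recon_error_eq_trace[OF P0 X]
      power2_sum)

theorem mainTheorem5:
  fixes P0 :: "(real^'d) measure" and \<rho> :: real
  assumes rd: "CARD('r) < CARD('d)"
    and P0: "P0 \<in> Q2"
    and rho: "\<rho> \<ge> 0"
  shows "(\<forall>X::real^'r^'d. X \<in> stiefel \<longrightarrow>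
            phi P0 \<rho> X = (sqrt (trace (perp_proj X ** covar P0)) + \<rho>)\<^sup>2)
       \<and> (\<forall>(s::real^'r^'d \<Rightarrow> real) (X::real^'r^'d). X \<in> stiefel \<longrightarrow>
            phi P0 \<rho> X + s X = trace (perp_proj X ** covar P0) + s X
              + 2 * \<rho> * frob (perp_proj X ** psd_sqrt (covar P0)) + \<rho>\<^sup>2)
       \<and> (\<forall>(s::real^'r^'d \<Rightarrow> real). \<forall>X\<in>stiefel. \<forall>Y\<in>stiefel.
            (phi P0 \<rho> X + s X \<le> phi P0 \<rho> Y + s Y) \<longleftrightarrow>
            (trace (perp_proj X ** covar P0) + s X + 2 * \<rho> * frob (perp_proj X ** psd_sqrt (covar P0))
              \<le> trace (perp_proj Y ** covar P0) + s Y + 2 * \<rho> * frob (perp_proj Y ** psd_sqrt (covar P0))))"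
proof (intro conjI allI impI ballI)
  fix X :: "real^'r^'d" assume "X \<in> stiefel"
  then show "phi P0 \<rho> X = (sqrt (trace (perp_proj X ** covar P0)) + \<rho>)\<^sup>2"
    by (rule phi_eq_trace[OF rd P0 rho])
next
  fix s :: "real^'r^'d \<Rightarrow> real" and X :: "real^'r^'d" assume "X \<in> stiefel"
  then show "phi P0 \<rho> X + s X = trace (perp_proj X ** covar P0) + s X
      + 2 * \<rho> * frob (perp_proj X ** psd_sqrt (covar P0)) + \<rho>\<^sup>2"
    using phi_eq_trace_frob[OF rd P0 rho] by simp
next
  fix s :: "real^'r^'d \<Rightarrow> real" and X Y :: "real^'r^'d"
  assume X: "X \<in> stiefel" and Y: "Y \<in> stiefel"
  show "(phi P0 \<rho> X + s X \<le> phi P0 \<rho> Y + s Y) \<longleftrightarrow>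
      (trace (perp_proj X ** covar P0) + s X + 2 * \<rho> * frob (perp_proj X ** psd_sqrt (covar P0))
        \<le> trace (perp_proj Y ** covar P0) + s Y + 2 * \<rho> * frob (perp_proj Y ** psd_sqrt (covar P0)))"
    using phi_eq_trace_frob[OF rd P0 rho X] phi_eq_trace_frob[OF rd P0 rho Y] by linarith
qed

end
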